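(* Let $K_1$ and $K_2$ be flag simplicial complexes. Suppose that: (1) $L_1\subset K_1$ is a non-empty full sub-complex of $K_1$; (2) $\varphi:L_1\to K_2$ is a simplicial embedding; (3) the $1$-skeleton $\varphi(L_1)^{(1)}$ is a full sub-complex of the $1$-skeleton $K_2^{(1)}$. Then $K=K_1\sqcup_\varphi K_2$ is a flag complex. In particular, $K$ is a flag complex whenever both $L_1$ and $\varphi(L_1)$ are full sub-complexes of $K_1$ and $K_2$, respectively.
   Context: A simplicial complex is flag if every finite set of pairwise adjacent vertices spans a simplex. A sub-complex $L\subset K$ is full if every simplex of $K$ all of whose vertices lie in $L$ belongs to $L$. $K_1\sqcup_\varphi K_2$ denotes the complex obtained from the disjoint union $K_1\sqcup K_2$ by identifying each simplex $\sigma$ of $L_1$ with its image $\varphi(\sigma)$. *)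

theory Defs
  imports Main
begin

definition simplicial_complex :: "'a set set \<Rightarrow> bool" where
  "simplicial_complex K \<longleftrightarrow>
     (\<forall>\<sigma>\<in>K. finite \<sigma> \<and> \<sigma> \<noteq> {}) \<and>
     (\<forall>\<sigma>\<in>K. \<forall>\<tau>. \<tau> \<subseteq> \<sigma> \<and> \<tau> \<noteq> {} \<longrightarrow> \<tau> \<in> K)"

definition vertices :: "'a set set \<Rightarrow> 'a set" where
  "vertices K = \<Union>K"

definition flag_complex :: "'a set set \<Rightarrow> bool" where
  "flag_complex K \<longleftrightarrow> simplicial_complex K \<and>
     (\<forall>S. finite S \<and> S \<noteq> {} \<and> S \<subseteq> vertices K \<and>
          (\<forall>u\<in>S. \<forall>v\<in>S. u \<noteq> v \<longrightarrow> {u, v} \<in> K) \<longrightarrow> S \<in> K)"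

definition subcomplex :: "'a set set \<Rightarrow> 'a set set \<Rightarrow> bool" where
  "subcomplex L K \<longleftrightarrow> simplicial_complex L \<and> L \<subseteq> K"

definition full_subcomplex :: "'a set set \<Rightarrow> 'a set set \<Rightarrow> bool" where
  "full_subcomplex L K \<longleftrightarrow> subcomplex L K \<and> (\<forall>\<sigma>\<in>K. \<sigma> \<subseteq> vertices L \<longrightarrow> \<sigma> \<in> L)"

definition simplicial_embedding :: "('a \<Rightarrow> 'b) \<Rightarrow> 'a set set \<Rightarrow> 'b set set \<Rightarrow> bool" where
  "simplicial_embedding \<phi> L K \<longleftrightarrow> inj_on \<phi> (vertices L) \<and> (\<forall>\<sigma>\<in>L. \<phi> ` \<sigma> \<in> K)"

definition cimage :: "('a \<Rightarrow> 'b) \<Rightarrow> 'a set set \<Rightarrow> 'b set set" where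
  "cimage \<phi> L = (\<lambda>\<sigma>. \<phi> ` \<sigma>) ` L"

definition skeleton1 :: "'a set set \<Rightarrow> 'a set set" where
  "skeleton1 K = {\<sigma>\<in>K. card \<sigma> \<le> 2}"

text \<open>Gluing K1 \<sqcup>_\<phi> K2, realised on the vertex type 'a + 'b: a vertex Inl v with
v a vertex of L1 is identified with (represented by) Inr (\<phi> v).\<close>
definition glue_map :: "'a set set \<Rightarrow> ('a \<Rightarrow> 'b) \<Rightarrow> 'a + 'b \<Rightarrow> 'a + 'b" where
  "glue_map L1 \<phi> x = (case x of Inl v \<Rightarrow> (if v \<in> vertices L1 then Inr (\<phi> v) else Inl v)
                                | Inr w \<Rightarrow> Inr w)"

definition glue :: "'a set set \<Rightarrow> 'a set set \<Rightarrow> ('a \<Rightarrow> 'b) \<Rightarrow> 'b set set \<Rightarrow> ('a + 'b) set set" where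
  "glue K1 L1 \<phi> K2 =
     (\<lambda>\<sigma>. glue_map L1 \<phi> ` Inl ` \<sigma>) ` K1 \<union> (\<lambda>\<tau>. Inr ` \<tau>) ` K2"

end

theory Submission
  imports Defs
begin

text \<open>Identify the vertices of \<open>K\<^sub>1 \<sqcup>\<^sub>\<phi> K\<^sub>2\<close> coming from \<open>K\<^sub>1\<close> with \<open>K\<^sub>1\<close> via the injective map
  \<open>g = glue_map L\<^sub>1 \<phi> \<circ> Inl\<close>. A set of pairwise adjacent vertices either consists of vertices of
  \<open>K\<^sub>2\<close> only, and is then a clique of \<open>K\<^sub>2\<close>, or contains a vertex of \<open>K\<^sub>1\<close> outside \<open>L\<^sub>1\<close>; since no
  simplex of \<open>K\<^sub>2\<close> contains such a vertex, all its neighbours lie in \<open>g(K\<^sub>1)\<close>, and the clique is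
  the \<open>g\<close>-image of a clique of \<open>K\<^sub>1\<close>. The latter holds because an edge of the gluing between
  \<open>g x\<close> and \<open>g y\<close> is an edge of \<open>K\<^sub>1\<close>: either it comes from \<open>K\<^sub>1\<close> directly, or it is an edge of \<open>K\<^sub>2\<close>
  between vertices of \<open>\<phi>(L\<^sub>1)\<close>, hence (by fullness of the 1-skeleton) of \<open>\<phi>(L\<^sub>1)\<close>, hence of \<open>L\<^sub>1\<close>.\<close>

lemma simplicial_complexD:
  assumes "simplicial_complex K" and "\<sigma> \<in> K"
  shows "finite \<sigma>" and "\<sigma> \<noteq> {}"
    and "\<tau> \<subseteq> \<sigma> \<Longrightarrow> \<tau> \<noteq> {} \<Longrightarrow> \<tau> \<in> K"
  using assms unfolding simplicial_complex_def by blast+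

definition clique :: "'a set set \<Rightarrow> 'a set \<Rightarrow> bool" where
  "clique K S \<longleftrightarrow> finite S \<and> S \<noteq> {} \<and> S \<subseteq> vertices K \<and> (\<forall>u\<in>S. \<forall>v\<in>S. u \<noteq> v \<longrightarrow> {u, v} \<in> K)"

lemma flag_complex_iff_clique:
  "flag_complex K \<longleftrightarrow> simplicial_complex K \<and> (\<forall>S. clique K S \<longrightarrow> S \<in> K)"
  unfolding flag_complex_def clique_def by (rule refl)

lemma flag_complexD:
  "flag_complex K \<Longrightarrow> clique K S \<Longrightarrow> S \<in> K"
  "flag_complex K \<Longrightarrow> simplicial_complex K"
  unfolding flag_complex_iff_clique by blast+

lemma full_subcomplexD:
  assumes "full_subcomplex L K"
  shows "simplicial_complex L" and "L \<subseteq> K"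
    and "\<sigma> \<in> K \<Longrightarrow> \<sigma> \<subseteq> vertices L \<Longrightarrow> \<sigma> \<in> L"
  using assms unfolding full_subcomplex_def subcomplex_def by blast+

lemma singleton_in_complex:
  assumes "simplicial_complex K" and "v \<in> vertices K"
  shows "{v} \<in> K"
  using assms simplicial_complexD(3)[OF assms(1)] by (auto simp: vertices_def)

lemma vertices_skeleton1:
  assumes "simplicial_complex K"
  shows "vertices (skeleton1 K) = vertices K"
proof
  show "vertices K \<subseteq> vertices (skeleton1 K)"
  proof
    fix v assume "v \<in> vertices K"
    then have "{v} \<in> skeleton1 K"
      using singleton_in_complex[OF assms] by (simp add: skeleton1_def)
    then show "v \<in> vertices (skeleton1 K)" by (auto simp: vertices_def)
  qed
qed (auto simp: vertices_def skeleton1_def)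

lemma simplicial_complex_skeleton1:
  assumes "simplicial_complex K"
  shows "simplicial_complex (skeleton1 K)"
proof -
  have "card \<tau> \<le> 2" if "\<sigma> \<in> K" "card \<sigma> \<le> 2" "\<tau> \<subseteq> \<sigma>" for \<sigma> \<tau>
    using card_mono[OF simplicial_complexD(1)[OF assms that(1)] that(3)] that(2) by linarith
  then show ?thesis
    using simplicial_complexD[OF assms] unfolding simplicial_complex_def skeleton1_def by blast
qed

lemma full_subcomplex_skeleton1:
  assumes "full_subcomplex M K"
  shows "full_subcomplex (skeleton1 M) (skeleton1 K)"
  unfolding full_subcomplex_def subcomplex_def
proof (intro conjI ballI impI)
  note M = full_subcomplexD[OF assms]
  show "simplicial_complex (skeleton1 M)" by (rule simplicial_complex_skeleton1[OF M(1)])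
  show "skeleton1 M \<subseteq> skeleton1 K" using M(2) by (auto simp: skeleton1_def)
  fix \<sigma> assume "\<sigma> \<in> skeleton1 K" "\<sigma> \<subseteq> vertices (skeleton1 M)"
  then show "\<sigma> \<in> skeleton1 M"
    using M(3) vertices_skeleton1[OF M(1)] by (simp add: skeleton1_def)
qed

lemma edge_in_full_skeleton1:
  assumes "simplicial_complex M" and "full_subcomplex (skeleton1 M) (skeleton1 K)"
    and "b \<in> vertices M" and "b' \<in> vertices M" and "{b, b'} \<in> K"
  shows "{b, b'} \<in> M"
proof -
  have "card {b, b'} \<le> 2" by (simp add: card_insert_if)
  then have "{b, b'} \<in> skeleton1 K" using assms(5) by (simp add: skeleton1_def)
  moreover have "{b, b'} \<subseteq> vertices (skeleton1 M)"
    using assms(3,4) vertices_skeleton1[OF assms(1)] by simp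
  ultimately have "{b, b'} \<in> skeleton1 M" by (rule full_subcomplexD(3)[OF assms(2)])
  then show ?thesis by (simp add: skeleton1_def)
qed

lemma vertices_cimage: "vertices (cimage \<phi> L) = \<phi> ` vertices L"
  by (auto simp: vertices_def cimage_def)

lemma simplicial_complex_cimage:
  assumes "simplicial_complex L"
  shows "simplicial_complex (cimage \<phi> L)"
  unfolding simplicial_complex_def
proof (intro conjI ballI allI impI)
  fix X assume "X \<in> cimage \<phi> L"
  then obtain \<sigma> where \<sigma>: "\<sigma> \<in> L" "X = \<phi> ` \<sigma>" by (auto simp: cimage_def)
  then show "finite X" "X \<noteq> {}" using simplicial_complexD(1,2)[OF assms \<sigma>(1)] by simp_all
  fix \<tau> assume \<tau>: "\<tau> \<subseteq> X \<and> \<tau> \<noteq> {}"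
  have "{x \<in> \<sigma>. \<phi> x \<in> \<tau>} \<in> L"
    using \<tau> \<sigma> by (intro simplicial_complexD(3)[OF assms \<sigma>(1)]) auto
  moreover have "\<tau> = \<phi> ` {x \<in> \<sigma>. \<phi> x \<in> \<tau>}" using \<tau> \<sigma>(2) by auto
  ultimately show "\<tau> \<in> cimage \<phi> L" unfolding cimage_def by (rule rev_image_eqI)
qed

lemma glue_iff:
  "X \<in> glue K1 L1 \<phi> K2 \<longleftrightarrow>
     (\<exists>\<rho>\<in>K1. X = (\<lambda>x. glue_map L1 \<phi> (Inl x)) ` \<rho>) \<or> (\<exists>\<tau>\<in>K2. X = Inr ` \<tau>)"
  by (auto simp: glue_def image_image)

lemma glue_map_Inl:
  "glue_map L1 \<phi> (Inl x) = (if x \<in> vertices L1 then Inr (\<phi> x) else Inl x)"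
  by (simp add: glue_map_def)

lemma inj_glue_map_Inl:
  assumes "inj_on \<phi> (vertices L1)"
  shows "inj (\<lambda>x. glue_map L1 \<phi> (Inl x))"
  using assms by (auto simp: inj_def inj_on_def glue_map_Inl)

lemma simplicial_complex_glue:
  assumes "simplicial_complex K1" and "simplicial_complex K2"
  shows "simplicial_complex (glue K1 L1 \<phi> K2)"
proof -
  have image_face: "\<exists>\<rho>'\<in>K. \<tau> = h ` \<rho>'"
    if "simplicial_complex K" "\<rho> \<in> K" "\<tau> \<subseteq> h ` \<rho>" "\<tau> \<noteq> {}" for K h \<rho> \<tau>
  proof
    show "{x \<in> \<rho>. h x \<in> \<tau>} \<in> K" using that by (intro simplicial_complexD(3)[OF that(1,2)]) auto
    show "\<tau> = h ` {x \<in> \<rho>. h x \<in> \<tau>}" using that(3) by auto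
  qed
  show ?thesis
    unfolding simplicial_complex_def
  proof (intro conjI ballI allI impI)
    fix X assume "X \<in> glue K1 L1 \<phi> K2"
    then consider \<rho> where "\<rho> \<in> K1" "X = (\<lambda>x. glue_map L1 \<phi> (Inl x)) ` \<rho>"
      | \<rho> where "\<rho> \<in> K2" "X = Inr ` \<rho>"
      unfolding glue_iff by blast
    note cases = this
    show "finite X"
      by (rule cases) (simp_all add: simplicial_complexD(1)[OF assms(1)] simplicial_complexD(1)[OF assms(2)])
    show "X \<noteq> {}"
      by (rule cases) (simp_all add: simplicial_complexD(2)[OF assms(1)] simplicial_complexD(2)[OF assms(2)])
  next
    fix X \<tau> assume X: "X \<in> glue K1 L1 \<phi> K2" and \<tau>: "\<tau> \<subseteq> X \<and> \<tau> \<noteq> {}"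
    from X consider \<rho> where "\<rho> \<in> K1" "X = (\<lambda>x. glue_map L1 \<phi> (Inl x)) ` \<rho>"
      | \<rho> where "\<rho> \<in> K2" "X = Inr ` \<rho>"
      unfolding glue_iff by blast
    then show "\<tau> \<in> glue K1 L1 \<phi> K2"
    proof cases
      case 1
      then show ?thesis
        using \<tau> image_face[OF assms(1) 1(1), of \<tau> "\<lambda>x. glue_map L1 \<phi> (Inl x)"]
        unfolding glue_iff by blast
    next
      case 2
      then show ?thesis
        using \<tau> image_face[OF assms(2) 2(1), of \<tau> Inr] unfolding glue_iff by blast
    qed
  qed
qed

lemma Inl_in_vertices_glue:
  assumes "Inl a \<in> vertices (glue K1 L1 \<phi> K2)"
  shows "a \<in> vertices K1 \<and> a \<notin> vertices L1"
proof -
  obtain \<rho> x where "\<rho> \<in> K1" "x \<in> \<rho>" "glue_map L1 \<phi> (Inl x) = Inl a"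
    using assms by (auto simp: vertices_def glue_iff)
  moreover from this(3) have "x = a" "a \<notin> vertices L1"
    by (auto simp: glue_map_Inl split: if_splits)
  ultimately show ?thesis by (auto simp: vertices_def)
qed

lemma Inr_in_vertices_glue:
  assumes "simplicial_embedding \<phi> L1 K2" and "Inr b \<in> vertices (glue K1 L1 \<phi> K2)"
  shows "b \<in> vertices K2"
proof -
  obtain X where X: "X \<in> glue K1 L1 \<phi> K2" "Inr b \<in> X" using assms(2) by (auto simp: vertices_def)
  then consider \<rho> x where "\<rho> \<in> K1" "x \<in> \<rho>" "glue_map L1 \<phi> (Inl x) = Inr b"
    | \<tau> where "\<tau> \<in> K2" "b \<in> \<tau>"
    unfolding glue_iff by (elim disjE bexE) auto
  then show ?thesis
  proof cases
    case 1
    then have "x \<in> vertices L1" "b = \<phi> x" by (auto simp: glue_map_Inl split: if_splits)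
    then obtain \<sigma> where "\<sigma> \<in> L1" "x \<in> \<sigma>" "b \<in> \<phi> ` \<sigma>" by (auto simp: vertices_def)
    moreover have "\<phi> ` \<sigma> \<in> K2" using assms(1) \<open>\<sigma> \<in> L1\<close> by (simp add: simplicial_embedding_def)
    ultimately show ?thesis by (auto simp: vertices_def)
  qed (auto simp: vertices_def)
qed

lemma glue_edge_InrD:
  assumes "simplicial_embedding \<phi> L1 K2" and "full_subcomplex L1 K1"
    and "{Inr b, Inr b'} \<in> glue K1 L1 \<phi> K2"
  shows "{b, b'} \<in> K2"
  using assms(3) unfolding glue_iff
proof (elim disjE bexE)
  fix \<rho> assume 1: "\<rho> \<in> K1" "{Inr b, Inr b'} = (\<lambda>x. glue_map L1 \<phi> (Inl x)) ` \<rho>"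
  have "\<rho> \<subseteq> vertices L1"
  proof
    fix x assume "x \<in> \<rho>"
    then have "glue_map L1 \<phi> (Inl x) \<in> {Inr b, Inr b'}" using 1(2) by blast
    then show "x \<in> vertices L1" by (auto simp: glue_map_Inl split: if_splits)
  qed
  then have "(\<lambda>x. glue_map L1 \<phi> (Inl x)) ` \<rho> = Inr ` \<phi> ` \<rho>"
    by (force simp: glue_map_Inl)
  with 1(2) have "{b, b'} = \<phi> ` \<rho>"
    by (metis image_empty image_insert inj_Inr inj_image_eq_iff)
  moreover have "\<rho> \<in> L1"
    using full_subcomplexD(3)[OF assms(2) 1(1) \<open>\<rho> \<subseteq> vertices L1\<close>] .
  ultimately show ?thesis using assms(1) by (simp add: simplicial_embedding_def)
next
  fix \<tau> assume "\<tau> \<in> K2" "{Inr b, Inr b'} = (Inr :: 'b \<Rightarrow> 'a + 'b) ` \<tau>"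
  then show ?thesis by (metis image_empty image_insert inj_Inr inj_image_eq_iff)
qed

lemma glue_edge_Inl_InrD:
  assumes "{Inl a, Inr b} \<in> glue K1 L1 \<phi> K2"
  shows "\<exists>v\<in>vertices L1. b = \<phi> v"
  using assms by (auto simp: glue_iff glue_map_Inl split: if_splits)

context
  fixes K1 L1 :: "'a set set" and K2 :: "'b set set" and \<phi> :: "'a \<Rightarrow> 'b"
  assumes flag1: "flag_complex K1" and flag2: "flag_complex K2"
    and full1: "full_subcomplex L1 K1"
    and embedding: "simplicial_embedding \<phi> L1 K2"
    and full_edges: "full_subcomplex (skeleton1 (cimage \<phi> L1)) (skeleton1 K2)"
begin

private abbreviation g :: "'a \<Rightarrow> 'a + 'b" where "g x \<equiv> glue_map L1 \<phi> (Inl x)"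

private lemma simplicial_complexes:
  "simplicial_complex K1" "simplicial_complex K2" "simplicial_complex L1"
  using flag1 flag2 full1 by (blast dest: flag_complexD full_subcomplexD)+

private lemma inj_on_vertices: "inj_on \<phi> (vertices L1)"
  using embedding by (simp add: simplicial_embedding_def)

lemma glue_edge_pullback:
  assumes "{g x, g y} \<in> glue K1 L1 \<phi> K2"
  shows "{x, y} \<in> K1"
  using assms unfolding glue_iff
proof (elim disjE bexE)
  fix \<rho> assume "\<rho> \<in> K1" "{g x, g y} = g ` \<rho>"
  then have "g ` {x, y} = g ` \<rho>" by simp
  then have "{x, y} = \<rho>" using inj_glue_map_Inl[OF inj_on_vertices] by (simp only: inj_image_eq_iff)
  with \<open>\<rho> \<in> K1\<close> show ?thesis by simp
next
  fix \<tau> assume "\<tau> \<in> K2" and xy: "{g x, g y} = Inr ` \<tau>"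
  then have L: "x \<in> vertices L1" "y \<in> vertices L1"
    by (auto simp: glue_map_Inl split: if_splits)
  with xy \<open>\<tau> \<in> K2\<close> have "{\<phi> x, \<phi> y} \<in> K2"
    by (metis glue_map_Inl image_empty image_insert inj_Inr inj_image_eq_iff)
  then have "{\<phi> x, \<phi> y} \<in> cimage \<phi> L1"
    using edge_in_full_skeleton1[OF simplicial_complex_cimage[OF simplicial_complexes(3)] full_edges]
      L by (simp add: vertices_cimage)
  then obtain \<rho> where \<rho>: "\<rho> \<in> L1" "{\<phi> x, \<phi> y} = \<phi> ` \<rho>" by (auto simp: cimage_def)
  moreover have "\<rho> \<subseteq> vertices L1" using \<rho>(1) by (auto simp: vertices_def)
  ultimately have "{x, y} \<subseteq> \<rho>"
    using L inj_on_vertices by (auto simp: inj_on_image_mem_iff[symmetric])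
  then show ?thesis
    using \<rho>(1) full_subcomplexD(2)[OF full1] simplicial_complexD(3)[OF simplicial_complexes(1)]
    by blast
qed

lemma clique_glue_Inr:
  assumes "clique (glue K1 L1 \<phi> K2) S" and "S \<subseteq> range Inr"
  shows "S \<in> glue K1 L1 \<phi> K2"
proof -
  have S_eq: "S = Inr ` (Inr -` S)" using assms(2) by blast
  have "clique K2 (Inr -` S)"
    unfolding clique_def
  proof (intro conjI ballI impI)
    show "finite (Inr -` S)" using assms(1) by (simp add: clique_def finite_vimageI)
    show "Inr -` S \<noteq> {}" using assms(1) S_eq by (metis clique_def image_empty)
    show "Inr -` S \<subseteq> vertices K2"
      using assms(1) Inr_in_vertices_glue[OF embedding] by (auto simp: clique_def)
    fix u v assume "u \<in> Inr -` S" "v \<in> Inr -` S" "u \<noteq> v"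
    with assms(1) show "{u, v} \<in> K2"
      by (intro glue_edge_InrD[OF embedding full1]) (auto simp: clique_def)
  qed
  then have "Inr -` S \<in> K2" by (rule flag_complexD(1)[OF flag2])
  with S_eq show ?thesis unfolding glue_iff by blast
qed

lemma clique_glue_Inl_subset_range:
  assumes "clique (glue K1 L1 \<phi> K2) S" and "Inl a \<in> S"
  shows "S \<subseteq> range g"
proof
  fix s assume "s \<in> S"
  show "s \<in> range g"
  proof (cases s)
    case (Inl a')
    with \<open>s \<in> S\<close> assms(1) have "Inl a' \<in> vertices (glue K1 L1 \<phi> K2)"
      by (auto simp: clique_def)
    then have "a' \<notin> vertices L1" by (blast dest: Inl_in_vertices_glue)
    then show ?thesis using Inl by (force simp: glue_map_Inl)
  next
    case (Inr b)
    with \<open>s \<in> S\<close> assms have "{Inl a, Inr b} \<in> glue K1 L1 \<phi> K2" by (auto simp: clique_def)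
    then show ?thesis using Inr glue_edge_Inl_InrD by (force simp: glue_map_Inl)
  qed
qed

lemma clique_glue_Inl:
  assumes "clique (glue K1 L1 \<phi> K2) S" and "Inl a \<in> S"
  shows "S \<in> glue K1 L1 \<phi> K2"
proof -
  have S_eq: "S = g ` (g -` S)" using clique_glue_Inl_subset_range[OF assms] by blast
  have "clique K1 (g -` S)"
    unfolding clique_def
  proof (intro conjI ballI impI)
    show "finite (g -` S)"
      using assms(1) inj_glue_map_Inl[OF inj_on_vertices] by (simp add: clique_def finite_vimageI)
    show "g -` S \<noteq> {}" using assms(1) S_eq by (metis clique_def image_empty)
    show "g -` S \<subseteq> vertices K1"
    proof
      fix x assume x: "x \<in> g -` S"
      show "x \<in> vertices K1"
      proof (cases "x \<in> vertices L1")
        case True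
        then show ?thesis using full_subcomplexD(2)[OF full1] by (auto simp: vertices_def)
      next
        case False
        with x assms(1) have "Inl x \<in> vertices (glue K1 L1 \<phi> K2)"
          by (auto simp: clique_def glue_map_Inl)
        then show ?thesis by (blast dest: Inl_in_vertices_glue)
      qed
    qed
    fix x y assume "x \<in> g -` S" "y \<in> g -` S" "x \<noteq> y"
    moreover from \<open>x \<noteq> y\<close> have "g x \<noteq> g y"
      using inj_glue_map_Inl[OF inj_on_vertices] by (metis injD)
    ultimately have "{g x, g y} \<in> glue K1 L1 \<phi> K2"
      using assms(1) by (simp add: clique_def)
    then show "{x, y} \<in> K1" by (rule glue_edge_pullback)
  qed
  then have "g -` S \<in> K1" by (rule flag_complexD(1)[OF flag1])
  with S_eq show ?thesis unfolding glue_iff by blast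
qed

lemma flag_complex_glue: "flag_complex (glue K1 L1 \<phi> K2)"
  unfolding flag_complex_iff_clique
proof (intro conjI allI impI simplicial_complex_glue simplicial_complexes)
  fix S assume S: "clique (glue K1 L1 \<phi> K2) S"
  show "S \<in> glue K1 L1 \<phi> K2"
  proof (cases "\<exists>a. Inl a \<in> S")
    case True
    then show ?thesis using clique_glue_Inl[OF S] by blast
  next
    case False
    have "S \<subseteq> range Inr"
    proof
      fix s assume "s \<in> S"
      with False show "s \<in> range Inr" by (cases s) auto
    qed
    then show ?thesis by (rule clique_glue_Inr[OF S])
  qed
qed

end

theorem mainTheorem1:
  fixes K1 L1 :: "'a set set" and K2 :: "'b set set" and \<phi> :: "'a \<Rightarrow> 'b"
  assumes "flag_complex K1" and "flag_complex K2"
    and "L1 \<noteq> {}" and "full_subcomplex L1 K1"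
    and "simplicial_embedding \<phi> L1 K2"
  shows "(full_subcomplex (skeleton1 (cimage \<phi> L1)) (skeleton1 K2)
           \<longrightarrow> flag_complex (glue K1 L1 \<phi> K2)) \<and>
         (full_subcomplex (cimage \<phi> L1) K2 \<longrightarrow> flag_complex (glue K1 L1 \<phi> K2))"
  using flag_complex_glue[OF assms(1,2,4,5)] full_subcomplex_skeleton1 by blast

end
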